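(* Let $s,k$ be positive integers with $s>2\cdot10^6$, and let $n=\lceil 3e(s+1)k\rceil$. Let $\mathcal F\subset\binom{[n]}{k}$ be a nonempty shifted family and let $$\beta:=\min_{F\in\mathcal F}\ \max_{\ell\in[n]}\frac{|F\cap[\ell]|}{\ell},$$ i.e. $\beta$ is the largest rational number such that for every $F\in\mathcal F$ there is $\ell$ with $|F\cap[\ell]|\ge\beta\ell$. If $\beta>\frac{4}{3(s+1)}$, then $|\mathcal F|<\binom{n}{k}-\binom{n-s}{k}$.
   Context: $[n]=\{1,\ldots,n\}$; $\binom{X}{k}$ is the family of all $k$-subsets of $X$. A family $\mathcal F\subset\binom{[n]}{k}$ is shifted if whenever $A\in\mathcal F$ and $B$ is obtained from $A$ by replacing some elements with smaller elements, then $B\in\mathcal F$. Note $\binom{n}{k}-\binom{n-s}{k}$ is the number of $k$-subsets of $[n]$ meeting $[s]$. *)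

theory Defs
  imports "HOL-Analysis.Analysis"
begin

text \<open>A family of k-subsets of [n] is shifted: replacing an element j of a member by a
smaller element i not in the member gives again a member (elementary shifts; the
general "replace some elements by smaller ones" closure follows by iteration).\<close>
definition shifted :: "nat set set \<Rightarrow> bool" where
  "shifted F \<longleftrightarrow> (\<forall>A\<in>F. \<forall>i j. i \<ge> 1 \<and> i < j \<and> j \<in> A \<and> i \<notin> A \<longrightarrow> insert i (A - {j}) \<in> F)"

definition beta :: "nat \<Rightarrow> nat set set \<Rightarrow> real" where
  "beta n F = Min ((\<lambda>A. Max ((\<lambda>l. real (card (A \<inter> {1..l})) / real l) ` {1..n})) ` F)"

end

theory Submission
  imports Defs
begin

text \<open>
  Put \<open>a = 3 (s + 1) / 4\<close>. Since \<open>beta n F > 1 / a\<close>, every member \<open>A\<close> of \<open>F\<close> has a prefix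
  \<open>[l]\<close> with \<open>m = |A \<inter> [l]| > l / a\<close>, so \<open>A\<close> meets \<open>[\<lfloor>m a\<rfloor>]\<close> in at least \<open>m\<close> points.
  For \<open>m = 1\<close> this only says that \<open>A\<close> meets \<open>[L\<^sub>1]\<close>, \<open>L\<^sub>1 = \<lfloor>a\<rfloor>\<close>; there are
  \<open>C(n,k) - C(n-L\<^sub>1,k)\<close> such sets, fewer than \<open>C(n,k) - C(n-s,k)\<close> by at least
  \<open>(s - L\<^sub>1) C(n-s,k-1) \<ge> (s-3)/4 (1 - 1/(3e)) C(n-1,k-1)\<close>.
  For \<open>m \<ge> 2\<close> there are at most \<open>C(\<lfloor>m a\<rfloor>,m) C(n-m,k-m) \<le> (n/k) C(n-1,k-1) (m x)\<^sup>m / m!\<close>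
  such sets, where \<open>x = a k / n \<le> 1/(4e)\<close>; these bounds decay geometrically and add up to at
  most \<open>(n/k) C(n-1,k-1) / (6e\<^sup>2) \<approx> (s+1)/(2e) C(n-1,k-1)\<close>, which is below the gap as soon
  as \<open>s \<ge> 30\<close>.
\<close>

lemma binomial_add_ge: "(N choose Suc j) + d * (N choose j) \<le> (N + d) choose Suc j"
proof (induction d)
  case 0
  show ?case by simp
next
  case (Suc d)
  have "N choose j \<le> (N + d) choose j" by (rule binomial_right_mono) simp
  with Suc.IH have "(N choose Suc j) + Suc d * (N choose j)
      \<le> ((N + d) choose Suc j) + ((N + d) choose j)" by simp
  also have "\<dots> = (N + Suc d) choose Suc j" by simp
  finally show ?case .
qed

lemma binomial_diff_ge:
  fixes N j K M :: nat
  assumes "j \<le> N" "M \<le> N - j" "0 < M"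
  shows "real (N choose K) * (1 - real j * real K / real M) \<le> real ((N - j) choose K)"
  using assms
proof (induction j)
  case 0
  then show ?case by simp
next
  case (Suc j)
  define N' where "N' = N - j"
  have N': "1 \<le> N'" "N - Suc j = N' - 1" "M \<le> N'" using Suc.prems unfolding N'_def by auto
  have IH: "real (N choose K) * (1 - real j * real K / real M) \<le> real (N' choose K)"
    using Suc by (simp add: N'_def)
  have "real (N' - K) * real (N' choose K) = real N' * real ((N' - 1) choose K)"
    using binomial_absorb_comp[of N' K] by (metis of_nat_mult)
  moreover have "real N' - real K \<le> real (N' - K)" by simp
  ultimately have "(real N' - real K) * real (N' choose K) \<le> real N' * real ((N' - 1) choose K)"
    by (metis mult_right_mono of_nat_0_le_iff)
  then have step: "real (N' choose K) - real K * real (N' choose K) / real N' \<le> real ((N' - 1) choose K)"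
    using N' by (simp add: field_simps)
  have "real (N' choose K) \<le> real (N choose K)"
    using binomial_right_mono[of N' N K] by (simp add: N'_def)
  then have "real K * real (N' choose K) / real N' \<le> real K * real (N choose K) / real M"
    using N' Suc.prems by (intro frac_le mult_left_mono) auto
  moreover have "real (N choose K) * (1 - real (Suc j) * real K / real M)
      = real (N choose K) * (1 - real j * real K / real M) - real K * real (N choose K) / real M"
    using Suc.prems by (simp add: field_simps)
  ultimately show ?case unfolding N'(2) using IH step by linarith
qed

lemma binomial_diff_diff_le:
  fixes n k m :: nat
  assumes "1 \<le> m" "m \<le> k" "k \<le> n"
  shows "real ((n - m) choose (k - m)) \<le> (real k / real n) ^ (m - 1) * real ((n - 1) choose (k - 1))"
  using assms(1,2)
proof (induction m rule: dec_induct)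
  case base
  then show ?case by simp
next
  case (step m)
  define N where "N = n - m"
  define K where "K = k - m"
  have K: "0 < K" using step unfolding K_def by simp
  have N: "0 < real N" using step assms unfolding N_def by simp
  have "real K * real (N choose K) = real N * real ((N - 1) choose (K - 1))"
    using times_binomial_minus1_eq[OF K, of N] by (metis of_nat_mult)
  moreover have "N - 1 = n - Suc m" "K - 1 = k - Suc m" unfolding N_def K_def by auto
  ultimately have "real ((n - Suc m) choose (k - Suc m)) = real K / real N * real (N choose K)"
    using N by (simp add: field_simps)
  also have "\<dots> \<le> real k / real n * real (N choose K)"
  proof (rule mult_right_mono)
    show "real K / real N \<le> real k / real n"
      using step assms N mult_right_mono[of "real k" "real n" "real m"]
      unfolding K_def N_def by (simp add: field_simps)
  qed simp
  also have "\<dots> \<le> real k / real n * ((real k / real n) ^ (m - 1) * real ((n - 1) choose (k - 1)))"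
    using step by (intro mult_left_mono) (auto simp: N_def K_def)
  also have "\<dots> = (real k / real n) ^ (Suc m - 1) * real ((n - 1) choose (k - 1))"
    using step(1) by (cases m) auto
  finally show ?case .
qed

lemma binomial_le_pow_div_fact: "real (n choose k) \<le> real n ^ k / fact k"
proof -
  have "real ((n choose k) * fact k) \<le> real (n ^ k)"
    by (simp only: of_nat_le_iff binomial_fact_pow)
  then show ?thesis by (simp add: field_simps)
qed

lemma pow_div_fact_Suc_le:
  fixes x :: real
  assumes "0 \<le> x" "1 \<le> m"
  shows "(real (Suc m) * x) ^ Suc m / fact (Suc m) \<le> exp 1 * x * ((real m * x) ^ m / fact m)"
proof -
  have m: "0 < real m" using assms by simp
  have "real (Suc m) ^ m = (1 + 1 / real m) ^ m * real m ^ m"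
    using m by (simp add: power_mult_distrib[symmetric] field_simps)
  also have "\<dots> \<le> exp 1 * real m ^ m"
  proof (rule mult_right_mono)
    show "(1 + 1 / real m) ^ m \<le> exp 1"
      using exp_ge_one_plus_x_over_n_power_n[where x=1 and n=m] m by simp
  qed simp
  finally have "x * (real (Suc m) ^ m * x ^ m) / fact m \<le> x * (exp 1 * real m ^ m * x ^ m) / fact m"
    using assms by (intro divide_right_mono mult_left_mono mult_right_mono) auto
  moreover have "(real (Suc m) * x) ^ Suc m / fact (Suc m) = x * (real (Suc m) ^ m * x ^ m) / fact m"
    by (simp add: power_mult_distrib del: of_nat_Suc)
  ultimately show ?thesis by (simp add: power_mult_distrib mult_ac)
qed

lemma sum_le_geometric:
  fixes t :: "nat \<Rightarrow> real"
  assumes decay: "\<And>m. j \<le> m \<Longrightarrow> t (Suc m) \<le> q * t m"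
    and "0 \<le> q" "q < 1" "\<And>m. 0 \<le> t m"
  shows "(\<Sum>m=j..k. t m) \<le> t j / (1 - q)"
proof (cases "j \<le> k")
  case True
  then have "(1 - q) * (\<Sum>m=j..k. t m) \<le> t j - q * t k"
  proof (induction k rule: dec_induct)
    case base
    then show ?case by (simp add: algebra_simps)
  next
    case (step k)
    then have "(1 - q) * (\<Sum>m=j..Suc k. t m) \<le> t j - q * t k + (1 - q) * t (Suc k)"
      by (simp add: algebra_simps)
    also have "\<dots> \<le> t j - q * t (Suc k)" using decay[OF step(1)] by (simp add: algebra_simps)
    finally show ?case .
  qed
  moreover have "0 \<le> q * t k" using assms by simp
  ultimately have "(1 - q) * (\<Sum>m=j..k. t m) \<le> t j" by linarith
  then show ?thesis using assms by (simp add: field_simps)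
next
  case False
  then show ?thesis using assms by simp
qed

lemma binomial_mult_binomial_diff_le:
  assumes "1 \<le> m" "m \<le> k" "k \<le> n"
  shows "real (L choose m) * real ((n - m) choose (k - m))
    \<le> real n / real k * real ((n - 1) choose (k - 1)) * ((real L * (real k / real n)) ^ m / fact m)"
proof -
  define r where "r = real k / real n"
  have r: "0 < r" unfolding r_def using assms by simp
  have "real ((n - m) choose (k - m)) \<le> r ^ (m - 1) * real ((n - 1) choose (k - 1))"
    unfolding r_def using assms by (rule binomial_diff_diff_le)
  then have "real (L choose m) * real ((n - m) choose (k - m))
      \<le> real L ^ m / fact m * (r ^ (m - 1) * real ((n - 1) choose (k - 1)))"
    using binomial_le_pow_div_fact r by (intro mult_mono) auto
  also have "\<dots> = 1 / r * real ((n - 1) choose (k - 1)) * ((real L * r) ^ m / fact m)"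
    using assms r by (cases m) (auto simp: field_simps)
  finally show ?thesis unfolding r_def by simp
qed

lemma sum_binomial_prefix_le:
  fixes a :: real and L :: "nat \<Rightarrow> nat"
  assumes "0 < k" "k \<le> n" "0 \<le> a" and L: "\<And>m. real (L m) \<le> real m * a"
    and n: "4 * exp 1 * a * real k \<le> real n"
  shows "(\<Sum>m=2..k. real (L m choose m) * real ((n - m) choose (k - m)))
    \<le> real n / real k * real ((n - 1) choose (k - 1)) / (6 * exp 1 ^ 2)"
proof -
  define C where "C = real n / real k * real ((n - 1) choose (k - 1))"
  define x :: real where "x = 1 / (4 * exp 1)"
  define t where "t m = (real m * x) ^ m / fact m" for m
  have C: "0 \<le> C" unfolding C_def by simp
  have x: "0 \<le> x" "exp 1 * x = 1 / 4" unfolding x_def by simp_all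
  have "a * (real k / real n) \<le> x"
    using n assms unfolding x_def by (simp add: field_simps)
  have "real (L m choose m) * real ((n - m) choose (k - m)) \<le> C * t m" if "m \<in> {2..k}" for m
  proof -
    have "real (L m) * (real k / real n) \<le> real m * a * (real k / real n)"
      using L by (rule mult_right_mono) simp
    also have "\<dots> \<le> real m * x"
      unfolding mult.assoc using \<open>a * (real k / real n) \<le> x\<close> by (rule mult_left_mono) simp
    finally have "(real (L m) * (real k / real n)) ^ m / fact m \<le> t m"
      unfolding t_def by (intro divide_right_mono power_mono) auto
    moreover have "real (L m choose m) * real ((n - m) choose (k - m))
        \<le> C * ((real (L m) * (real k / real n)) ^ m / fact m)"
      using binomial_mult_binomial_diff_le[of m k n "L m"] that assms unfolding C_def by simp
    ultimately show ?thesis using C by (meson mult_left_mono order_trans)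
  qed
  then have "(\<Sum>m=2..k. real (L m choose m) * real ((n - m) choose (k - m))) \<le> C * (\<Sum>m=2..k. t m)"
    unfolding sum_distrib_left by (intro sum_mono) blast
  also have "\<dots> \<le> C * (1 / (6 * exp 1 ^ 2))"
  proof (rule mult_left_mono)
    \<comment> \<open>With \<open>x = 1 / (4 e)\<close> the terms \<open>t m\<close> decay at least by the factor \<open>e x = 1 / 4\<close>.\<close>
    have "(\<Sum>m=2..k. t m) \<le> t 2 / (1 - 1 / 4)"
    proof (rule sum_le_geometric)
      show "t (Suc m) \<le> 1 / 4 * t m" if "2 \<le> m" for m
        using pow_div_fact_Suc_le[of x m] x that unfolding t_def by simp
    qed (use x in \<open>auto simp: t_def\<close>)
    also have "t 2 / (1 - 1 / 4) = 1 / (6 * exp 1 ^ 2)"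
      unfolding t_def x_def by (simp add: field_simps power2_eq_square)
    finally show "(\<Sum>m=2..k. t m) \<le> 1 / (6 * exp 1 ^ 2)" .
  qed (rule C)
  finally show ?thesis unfolding C_def by simp
qed

lemma binomial_diff_pred_ge:
  fixes c :: real
  assumes "1 \<le> c" "1 \<le> s" "0 < k" and n: "c * real (s + 1) * real k \<le> real n"
  shows "real ((n - 1) choose (k - 1)) * (1 - 1 / c) \<le> real ((n - s) choose (k - 1))"
proof -
  have "real (s + 1) \<le> c * real (s + 1) * real k"
    using assms mult_mono[of 1 c "real (s + 1)" "real (s + 1) * real k"] by (simp add: mult.assoc)
  then have "s < n" using n by linarith
  have "real s \<le> c * (real s + 2 * real k - 1)"
    using assms mult_mono[of 1 c "real s" "real s + 2 * real k - 1"] by simp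
  moreover have "c * ((real s - 1) * (real k - 1)) + c * (real s + 2 * real k - 1)
      = c * real (s + 1) * real k"
    by (simp add: algebra_simps)
  ultimately have "c * ((real s - 1) * (real k - 1)) \<le> real n - real s"
    using n by linarith
  then have M: "c * (real (s - 1) * real (k - 1)) \<le> real (n - s)"
    using assms \<open>s < n\<close> by simp
  have "real ((n - 1) choose (k - 1)) * (1 - 1 / c)
      \<le> real ((n - 1) choose (k - 1)) * (1 - real (s - 1) * real (k - 1) / real (n - s))"
    using M assms \<open>s < n\<close> by (intro mult_left_mono) (auto simp: field_simps)
  also have "\<dots> \<le> real ((n - 1 - (s - 1)) choose (k - 1))"
    using assms \<open>s < n\<close> by (intro binomial_diff_ge) auto
  also have "n - 1 - (s - 1) = n - s" using assms by simp
  finally show ?thesis .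
qed

lemma exp1_estimate:
  fixes s :: real
  assumes "30 \<le> s"
  shows "(3 * exp 1 * (s + 1) + 1) / (6 * exp 1 ^ 2) < (s - 3) / 4 * (1 - 1 / (3 * exp 1))"
proof -
  define e :: real where "e = exp 1"
  have e: "2718 / 1000 < e" "e < 272 / 100"
    using e_approx_32 e_less_272 unfolding e_def by (auto simp: abs_if split: if_split_asm)
  have "2718 / 1000 * e \<le> e * e" using e by (intro mult_right_mono) auto
  then have "9 * (e * e) + 3 * e + 2 < 90 * (e * e) - 210 * e" using e by linarith
  also have "\<dots> = 30 * (3 * (e * e) - 7 * e)" by simp
  also have "\<dots> \<le> s * (3 * (e * e) - 7 * e)"
    using assms e \<open>2718 / 1000 * e \<le> e * e\<close> by (intro mult_right_mono) auto
  finally have "2 * (3 * e * (s + 1) + 1) < (s - 3) * (3 * (e * e) - e)"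
    by (simp add: algebra_simps)
  then have "2 * (3 * e * (s + 1) + 1) / (2 * (6 * e ^ 2)) < (s - 3) * (3 * (e * e) - e) / (2 * (6 * e ^ 2))"
    using e by (intro divide_strict_right_mono) auto
  moreover have "(3 * e * (s + 1) + 1) / (6 * e ^ 2) = 2 * (3 * e * (s + 1) + 1) / (2 * (6 * e ^ 2))"
    by (rule mult_divide_mult_cancel_left[symmetric]) simp
  moreover have "(s - 3) / 4 * (1 - 1 / (3 * e)) = (s - 3) * (3 * (e * e) - e) / (2 * (6 * e ^ 2))"
    using e by (simp add: field_simps power2_eq_square)
  ultimately show ?thesis unfolding e_def by simp
qed

definition prefix_heavy :: "nat \<Rightarrow> nat \<Rightarrow> nat \<Rightarrow> nat \<Rightarrow> nat set set" where
  "prefix_heavy n k L m = {A. A \<subseteq> {1..n} \<and> card A = k \<and> m \<le> card (A \<inter> {1..L})}"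

lemma finite_prefix_heavy: "finite (prefix_heavy n k L m)"
  unfolding prefix_heavy_def by (rule finite_subset[of _ "Pow {1..n}"]) auto

lemma card_prefix_heavy_one_le: "card (prefix_heavy n k L 1) \<le> (n choose k) - ((n - L) choose k)"
proof -
  define K where "K = {A. A \<subseteq> {1..n} \<and> card A = k}"
  define B where "B = {A. A \<subseteq> {L<..n} \<and> card A = k}"
  have "finite K" unfolding K_def by (rule finite_subset[of _ "Pow {1..n}"]) auto
  moreover have "B \<subseteq> K" unfolding B_def K_def by auto
  moreover have "prefix_heavy n k L 1 \<subseteq> K - B"
  proof
    fix A assume A: "A \<in> prefix_heavy n k L 1"
    then have "A \<inter> {1..L} \<noteq> {}" unfolding prefix_heavy_def by auto
    then show "A \<in> K - B" using A unfolding prefix_heavy_def K_def B_def by auto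
  qed
  ultimately have "card (prefix_heavy n k L 1) \<le> card K - card B"
    by (metis card_Diff_subset card_mono finite_Diff finite_subset)
  also have "card K = n choose k" unfolding K_def using n_subsets[of "{1..n}" k] by simp
  also have "card B = (n - L) choose k" unfolding B_def using n_subsets[of "{L<..n}" k] by simp
  finally show ?thesis .
qed

lemma card_prefix_heavy_le:
  assumes "m \<le> k"
  shows "card (prefix_heavy n k L m) \<le> (L choose m) * ((n - m) choose (k - m))"
proof -
  define P where "P = {1..L} \<inter> {1..n}"
  define Bs where "Bs = {B. B \<subseteq> P \<and> card B = m}"
  define G where "G B = (\<lambda>C. B \<union> C) ` {C. C \<subseteq> {1..n} - B \<and> card C = k - m}" for B
  have "finite P" unfolding P_def by simp
  then have fBs: "finite Bs" unfolding Bs_def by simp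
  have "prefix_heavy n k L m \<subseteq> (\<Union>B\<in>Bs. G B)"
  proof
    fix A assume "A \<in> prefix_heavy n k L m"
    then have A: "A \<subseteq> {1..n}" "card A = k" "m \<le> card (A \<inter> {1..L})" "finite A"
      unfolding prefix_heavy_def by (auto intro: finite_subset)
    then obtain B where B: "B \<subseteq> A \<inter> {1..L}" "card B = m"
      using obtain_subset_with_card_n by metis
    then have "B \<in> Bs" using A unfolding Bs_def P_def by blast
    moreover have "A - B \<in> {C. C \<subseteq> {1..n} - B \<and> card C = k - m}"
      using A B by (auto simp: card_Diff_subset finite_subset)
    moreover have "A = B \<union> (A - B)" using B by auto
    ultimately show "A \<in> (\<Union>B\<in>Bs. G B)" unfolding G_def by blast
  qed
  then have "card (prefix_heavy n k L m) \<le> card (\<Union>B\<in>Bs. G B)"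
    using fBs by (intro card_mono) (auto simp: G_def)
  also have "\<dots> \<le> (\<Sum>B\<in>Bs. card (G B))" by (rule card_UN_le[OF fBs])
  also have "\<dots> \<le> (\<Sum>B\<in>Bs. (n - m) choose (k - m))"
  proof (rule sum_mono)
    fix B assume "B \<in> Bs"
    then have B: "B \<subseteq> {1..n}" "card B = m" "finite B"
      unfolding Bs_def P_def by (auto intro: finite_subset)
    have "card (G B) \<le> card {C. C \<subseteq> {1..n} - B \<and> card C = k - m}"
      unfolding G_def by (rule card_image_le) simp
    also have "\<dots> = (n - m) choose (k - m)" using B n_subsets[of "{1..n} - B" "k - m"]
      by (simp add: card_Diff_subset)
    finally show "card (G B) \<le> (n - m) choose (k - m)" .
  qed
  also have "\<dots> = (card P choose m) * ((n - m) choose (k - m))"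
    unfolding Bs_def using n_subsets[OF \<open>finite P\<close>] by simp
  also have "\<dots> \<le> (L choose m) * ((n - m) choose (k - m))"
    unfolding P_def by (intro mult_right_mono binomial_right_mono) auto
  finally show ?thesis .
qed

lemma beta_le_prefix_density:
  assumes "finite F" "A \<in> F" "0 < n"
  shows "\<exists>l\<in>{1..n}. beta n F \<le> real (card (A \<inter> {1..l})) / real l"
proof -
  let ?density = "\<lambda>l. real (card (A \<inter> {1..l})) / real l"
  have "beta n F \<le> Max (?density ` {1..n})"
    unfolding beta_def using assms by (intro Min_le) auto
  moreover have "Max (?density ` {1..n}) \<in> ?density ` {1..n}"
    using assms by (intro Max_in) auto
  ultimately show ?thesis by auto
qed

lemma subset_prefix_heavy_if_beta_gt:
  assumes F: "F \<subseteq> {A. A \<subseteq> {1..n} \<and> card A = k}"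
    and "0 < n" "0 < a" "1 / a < beta n F"
  shows "F \<subseteq> (\<Union>m\<in>{1..k}. prefix_heavy n k (nat \<lfloor>real m * a\<rfloor>) m)"
proof
  fix A assume "A \<in> F"
  then have A: "A \<subseteq> {1..n}" "card A = k" "finite A" using F by (auto intro: finite_subset)
  have "finite F" using F by (rule finite_subset) (rule finite_subset[of _ "Pow {1..n}"], auto)
  then obtain l where l: "l \<in> {1..n}" "beta n F \<le> real (card (A \<inter> {1..l})) / real l"
    using beta_le_prefix_density \<open>A \<in> F\<close> \<open>0 < n\<close> by blast
  obtain m where m_def: "m = card (A \<inter> {1..l})" by simp
  have "real l < real l * (a * beta n F)"
    using l assms by (simp add: field_simps)
  also have "\<dots> \<le> a * real m"
    using l \<open>0 < a\<close> unfolding m_def by (simp add: field_simps)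
  finally have "real l < real m * a" by (simp add: mult.commute)
  then have "l \<le> nat \<lfloor>real m * a\<rfloor>" by (simp add: le_nat_floor)
  then have "card (A \<inter> {1..l}) \<le> card (A \<inter> {1..nat \<lfloor>real m * a\<rfloor>})"
    using A by (intro card_mono) auto
  then have "m \<le> card (A \<inter> {1..nat \<lfloor>real m * a\<rfloor>})" unfolding m_def[symmetric] .
  moreover have "1 \<le> m" using \<open>real l < real m * a\<close> by (cases m) auto
  moreover have "m \<le> k" unfolding m_def using A by (metis Int_lower1 card_mono)
  ultimately show "A \<in> (\<Union>m\<in>{1..k}. prefix_heavy n k (nat \<lfloor>real m * a\<rfloor>) m)"
    unfolding prefix_heavy_def using A by auto
qed

lemma sum_binomial_prefix_lt:
  fixes s k n :: nat
  defines "L \<equiv> \<lambda>m. nat \<lfloor>real m * (3 * real (s + 1) / 4)\<rfloor>"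
  assumes "30 \<le> s" "0 < k"
    and n: "3 * exp 1 * real (s + 1) * real k \<le> real n"
      "real n < 3 * exp 1 * real (s + 1) * real k + 1"
  shows "(\<Sum>m=2..k. (L m choose m) * ((n - m) choose (k - m))) < (s - L 1) * ((n - s) choose (k - 1))"
proof -
  define E :: real where "E = exp 1"
  define c where "c = 3 * E * real (s + 1)"
  define D where "D = real ((n - 1) choose (k - 1))"
  have "1 \<le> E" unfolding E_def by simp
  then have "1 \<le> 3 * E" "1 \<le> c" unfolding c_def using mult_mono[of 1 "3 * E" 1 "real (s + 1)"] by simp_all
  have n': "c * real k \<le> real n" "real n < c * real k + 1"
    using n unfolding c_def E_def by (simp_all add: mult.assoc)
  moreover have "real k \<le> c * real k" using \<open>1 \<le> c\<close> mult_right_mono[of 1 c "real k"] by simp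
  ultimately have "k \<le> n" by linarith
  then have D: "0 < D" unfolding D_def using \<open>0 < k\<close> by simp
  have "real n \<le> (c + 1) * real k" using n' \<open>0 < k\<close> by (simp add: algebra_simps)
  then have nk: "real n / real k \<le> c + 1" using \<open>0 < k\<close> by (simp add: pos_divide_le_eq)
  have L: "real (L m) \<le> real m * (3 * real (s + 1) / 4)" for m
    unfolding L_def by (rule of_nat_floor) simp
  have "4 * exp 1 * (3 * real (s + 1) / 4) * real k \<le> real n"
    using n(1) by (simp add: algebra_simps)
  from sum_binomial_prefix_le[OF \<open>0 < k\<close> \<open>k \<le> n\<close> _ L this]
  have "real (\<Sum>m=2..k. (L m choose m) * ((n - m) choose (k - m))) \<le> real n / real k * D / (6 * E ^ 2)"
    unfolding D_def E_def of_nat_sum of_nat_mult by simp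
  also have "\<dots> \<le> (3 * E * (real s + 1) + 1) / (6 * E ^ 2) * D"
    using mult_right_mono[OF nk, of "D / (6 * E ^ 2)"] D unfolding c_def by (simp add: ac_simps)
  also have "\<dots> < (real s - 3) / 4 * (1 - 1 / (3 * E)) * D"
    using exp1_estimate \<open>30 \<le> s\<close> D unfolding E_def by (intro mult_strict_right_mono) auto
  also have "\<dots> \<le> real (s - L 1) * (D * (1 - 1 / (3 * E)))"
  proof -
    have "(real s - 3) / 4 \<le> real (s - L 1)" using L[of 1] by simp
    moreover have "0 \<le> D * (1 - 1 / (3 * E))" using D \<open>1 \<le> E\<close> by simp
    ultimately have "(real s - 3) / 4 * (D * (1 - 1 / (3 * E))) \<le> real (s - L 1) * (D * (1 - 1 / (3 * E)))"
      by (rule mult_right_mono)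
    then show ?thesis by (simp add: mult_ac)
  qed
  also have "\<dots> \<le> real (s - L 1) * real ((n - s) choose (k - 1))"
    using \<open>1 \<le> 3 * E\<close> \<open>30 \<le> s\<close> \<open>0 < k\<close> n unfolding D_def E_def
    by (intro mult_left_mono binomial_diff_pred_ge) (auto simp: mult.assoc)
  finally show ?thesis by (simp only: of_nat_less_iff of_nat_mult[symmetric])
qed

lemma prefix_heavy_count_lt:
  fixes s k n :: nat
  defines "L \<equiv> \<lambda>m. nat \<lfloor>real m * (3 * real (s + 1) / 4)\<rfloor>"
  assumes "30 \<le> s" "0 < k" and n: "n = nat \<lceil>3 * exp 1 * real (s + 1) * real k\<rceil>"
  shows "((n choose k) - ((n - L 1) choose k)) + (\<Sum>m=2..k. (L m choose m) * ((n - m) choose (k - m)))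
    < (n choose k) - ((n - s) choose k)"
proof -
  define y where "y = 3 * exp 1 * real (s + 1) * real k"
  have "1 \<le> exp (1 :: real)" by simp
  then have "1 \<le> 3 * exp (1 :: real)" by linarith
  then have "1 \<le> 3 * exp 1 * real k" using \<open>0 < k\<close> mult_mono[of 1 "3 * exp 1" 1 "real k"] by simp
  then have "real (s + 1) \<le> y"
    unfolding y_def using mult_left_mono[of 1 "3 * exp 1 * real k" "real (s + 1)"] by (simp add: mult_ac)
  then have "real n = of_int \<lceil>y\<rceil>" unfolding n y_def[symmetric] by simp
  then have "y \<le> real n" "real n < y + 1" using ceiling_correct[of y] by linarith+
  with \<open>real (s + 1) \<le> y\<close> have "s < n" by linarith
  have "real (L 1) \<le> 3 * real (s + 1) / 4"
    unfolding L_def using of_nat_floor[of "3 * real (s + 1) / 4"] by simp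
  also have "\<dots> \<le> real s" using \<open>30 \<le> s\<close> by simp
  finally have "real (L 1) \<le> real s" .
  then have "L 1 \<le> s" by simp
  have "(\<Sum>m=2..k. (L m choose m) * ((n - m) choose (k - m))) < (s - L 1) * ((n - s) choose (k - 1))"
    unfolding L_def using assms \<open>y \<le> real n\<close> \<open>real n < y + 1\<close> unfolding y_def
    by (intro sum_binomial_prefix_lt) auto
  moreover have "((n - s) choose k) + (s - L 1) * ((n - s) choose (k - 1)) \<le> (n - L 1) choose k"
    using binomial_add_ge[of "n - s" "k - 1" "s - L 1"] \<open>0 < k\<close> \<open>L 1 \<le> s\<close> \<open>s < n\<close> by simp
  moreover have "(n - L 1) choose k \<le> n choose k" by (rule binomial_right_mono) simp
  ultimately show ?thesis by linarith
qed

theorem lemma3: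
  fixes s k n :: nat and F :: "nat set set"
  assumes "s > 2 * 10^6" and "k > 0"
    and "n = nat \<lceil>3 * exp 1 * real (s + 1) * real k\<rceil>"
    and "F \<subseteq> {A. A \<subseteq> {1..n} \<and> card A = k}"
    and "F \<noteq> {}"
    and "shifted F"
    and "beta n F > 4 / (3 * real (s + 1))"
  shows "card F < (n choose k) - ((n - s) choose k)"
proof -
  define L where "L m = nat \<lfloor>real m * (3 * real (s + 1) / 4)\<rfloor>" for m
  have "0 < 3 * exp 1 * real (s + 1) * real k" using assms(2) by simp
  then have "0 < n" using assms(3) by simp
  then have "F \<subseteq> (\<Union>m\<in>{1..k}. prefix_heavy n k (L m) m)"
    unfolding L_def using assms(4,7) by (intro subset_prefix_heavy_if_beta_gt) simp_all
  then have "card F \<le> card (\<Union>m\<in>{1..k}. prefix_heavy n k (L m) m)"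
    by (rule card_mono[rotated]) (simp add: finite_prefix_heavy)
  also have "\<dots> \<le> (\<Sum>m=1..k. card (prefix_heavy n k (L m) m))"
    by (rule card_UN_le) simp
  also have "\<dots> = card (prefix_heavy n k (L 1) 1) + (\<Sum>m=2..k. card (prefix_heavy n k (L m) m))"
    using assms(2) by (simp add: sum.atLeast_Suc_atMost numeral_2_eq_2)
  also have "\<dots> \<le> ((n choose k) - ((n - L 1) choose k))
      + (\<Sum>m=2..k. (L m choose m) * ((n - m) choose (k - m)))"
    by (intro add_mono card_prefix_heavy_one_le sum_mono card_prefix_heavy_le) simp
  also have "\<dots> < (n choose k) - ((n - s) choose k)"
    unfolding L_def using assms(1-3) by (intro prefix_heavy_count_lt) auto
  finally show ?thesis .
qed

end
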